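(* On $U$, for each $i=1,\dots,n$ let $\Psi_i\neq0$ be a (column) eigenvector with $L\Psi_i=\lambda_i\Psi_i$. Then $\mathbf{e}^T\Psi_i\neq0$ and $$\tilde\mu_i:=\left.\frac{\mathbf{x}^T(\lambda-L)^\vee\mathbf{e}}{\mathbf{e}^T(\lambda-L)^\vee\mathbf{e}}\right|_{\lambda=\lambda_i}=\frac{\mathbf{x}^T\Psi_i}{\mathbf{e}^T\Psi_i}.$$
   Context: Fix $n\ge1$. On the open subset of $\mathbb{R}^{2n}$ with coordinates $(x_1,\dots,x_n,p_1,\dots,p_n)$ where the $x_i$ are pairwise distinct, let $L$ be the $n\times n$ matrix with $L_{ij}=p_i\delta_{ij}+(1-\delta_{ij})/(x_i-x_j)$. $A^\vee$ denotes the adjugate of a square matrix $A$. $\mathbf{e}=(1,\dots,1)^T$, $\mathbf{x}=(x_1,\dots,x_n)^T$. $U$ is an open set on which $L$ has $n$ pairwise distinct real eigenvalues $\lambda_1,\dots,\lambda_n$. *)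

theory Defs
  imports "Jordan_Normal_Form.Char_Poly"
begin

definition CM_Lax :: "nat \<Rightarrow> (nat \<Rightarrow> real) \<Rightarrow> (nat \<Rightarrow> real) \<Rightarrow> real mat" where
  "CM_Lax n x p = mat n n (\<lambda>(i,j). if i = j then p i else 1 / (x i - x j))"

definition ones_vec :: "nat \<Rightarrow> real vec" where
  "ones_vec n = vec n (\<lambda>_. 1)"

end

theory Submission
  imports Defs "Jordan_Normal_Form.Jordan_Normal_Form_Existence"
begin

text \<open>Let \<open>M = \<lambda>\<^sub>i - L\<close>. Since \<open>L\<close> has \<open>n\<close> distinct eigenvalues, its characteristic
  polynomial is a product of distinct linear factors, so \<open>L\<close> is diagonalizable and the kernel
  of \<open>M\<close> is spanned by \<open>\<Psi>\<^sub>i\<close>. The columns of \<open>adj M\<close> lie in that kernel, so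
  \<open>adj M = \<Psi>\<^sub>i w\<^sup>T\<close> with \<open>w\<close> a left eigenvector, and the trace \<open>w\<^sup>T \<Psi>\<^sub>i\<close> of
  \<open>adj M\<close> is the derivative of the characteristic polynomial at the simple root \<open>\<lambda>\<^sub>i\<close>,
  hence nonzero. Pairing the Calogero-Moser relation \<open>[X, L] = e e\<^sup>T - I\<close> (with
  \<open>X = diag x\<close>) against \<open>w\<close> and \<open>\<Psi>\<^sub>i\<close> gives \<open>(w\<^sup>T e)(e\<^sup>T \<Psi>\<^sub>i) = w\<^sup>T \<Psi>\<^sub>i \<noteq> 0\<close>.
  So \<open>e\<^sup>T \<Psi>\<^sub>i \<noteq> 0\<close>, and \<open>adj M e = (w\<^sup>T e) \<Psi>\<^sub>i\<close> turns the quotient into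
  \<open>x\<^sup>T \<Psi>\<^sub>i / e\<^sup>T \<Psi>\<^sub>i\<close>.\<close>

lemma order_linear_factors:
  fixes a :: "'a::idom"
  assumes "distinct as"
  shows "order a (\<Prod>b\<leftarrow>as. [:-b, 1:]) = (if a \<in> set as then 1 else 0)"
proof -
  have "order a (\<Prod>b\<leftarrow>as. [:-b, 1:]) = (\<Sum>b\<leftarrow>as. if b = a then 1 else 0)"
    by (subst order_prod_list) (auto simp: o_def order_linear' intro: arg_cong[where f = sum_list])
  also have "\<dots> = (\<Sum>b\<in>set as. if b = a then 1 else 0)"
    using assms by (simp add: sum_list_distinct_conv_sum_set)
  finally show ?thesis by simp
qed

lemma rsquarefree_linear_factors:
  fixes as :: "'a::idom list"
  assumes "distinct as"
  shows "rsquarefree (\<Prod>a\<leftarrow>as. [:-a, 1:])"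
  unfolding rsquarefree_def order_linear_factors[OF assms] by auto

lemma linear_factors_dvd:
  fixes p :: "'a::idom poly"
  assumes "distinct as" and "\<forall>a\<in>set as. poly p a = 0"
  shows "(\<Prod>a\<leftarrow>as. [:-a, 1:]) dvd p"
  using assms
proof (induction as arbitrary: p)
  case (Cons a as)
  then obtain r where r: "p = [:-a, 1:] * r"
    using poly_eq_0_iff_dvd by (metis dvdE list.set_intros(1))
  have "\<forall>b\<in>set as. poly r b = 0"
    using Cons.prems by (auto simp: r)
  with Cons.IH[of r] Cons.prems have "(\<Prod>b\<leftarrow>as. [:-b, 1:]) dvd r" by simp
  then show ?case by (simp add: r del: mult_pCons_left)
qed simp

lemma char_poly_eq_linear_factors:
  fixes A :: "'a::field mat"
  assumes A: "A \<in> carrier_mat n n" and "distinct as" and "length as = n"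
    and "\<forall>a\<in>set as. eigenvalue A a"
  shows "char_poly A = (\<Prod>a\<leftarrow>as. [:-a, 1:])"
proof -
  let ?q = "\<Prod>a\<leftarrow>as. [:-a, 1:]"
  have p: "monic (char_poly A)" "degree (char_poly A) = n"
    using degree_monic_char_poly[OF A] by auto
  have q: "monic ?q" "degree ?q = n"
    by (rule monic_prod_list, force) (use degree_linear_factors[of uminus as] assms(3) in simp)
  have "?q dvd char_poly A"
    using assms by (intro linear_factors_dvd) (auto simp: eigenvalue_root_char_poly[OF A])
  then obtain r where r: "char_poly A = ?q * r" ..
  with p q have "monic r" by (metis monic_factor)
  moreover have "degree r = 0"
  proof -
    have "?q \<noteq> 0" "r \<noteq> 0" using p(1) q(1) r by auto
    then show ?thesis using degree_mult_eq[of ?q r] r p(2) q(2) by simp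
  qed
  ultimately have "r = 1" using monic_degree_0 by blast
  with r show ?thesis by simp
qed

lemma sum_list_map_fst_ones:
  "\<forall>x\<in>set xs. fst x = (1::nat) \<Longrightarrow> sum_list (map fst xs) = length xs"
  by (induction xs) auto

lemma jordan_matrix_size_one_blocks_entry:
  assumes "\<forall>x\<in>set n_as. fst x = 1" and "i < length n_as" and "j < length n_as"
  shows "jordan_matrix n_as $$ (i, j) = (if i = j then snd (n_as ! i) else 0)"
  using assms
proof (induction n_as arbitrary: i j)
  case (Cons na n_as)
  obtain a where na: "na = (1, a)"
    using Cons.prems(1) by (metis list.set_intros(1) prod.collapse)
  have "dim_row (jordan_matrix n_as) = length n_as" "dim_col (jordan_matrix n_as) = length n_as"
    using sum_list_map_fst_ones[of n_as] Cons.prems(1) by auto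
  then show ?case
    using Cons.prems Cons.IH[of "i - 1" "j - 1"] by (auto simp: na jordan_matrix_Cons)
qed simp

lemma jordan_nf_simple_spectrum:
  fixes A :: "'a::field mat"
  assumes jnf: "jordan_nf A n_as" and cp: "char_poly A = (\<Prod>a\<leftarrow>as. [:-a, 1:])"
    and "distinct as"
  shows "\<forall>x\<in>set n_as. fst x = 1"
    and "e \<in> set as \<Longrightarrow> length (filter (\<lambda>x. snd x = e) n_as) = 1"
proof -
  have ord: "order e (char_poly A) = (if e \<in> set as then 1 else 0)" for e
    unfolding cp by (rule order_linear_factors[OF \<open>distinct as\<close>])
  show ones: "\<forall>x\<in>set n_as. fst x = 1"
  proof
    fix x assume x: "x \<in> set n_as"
    obtain s e where xe: "x = (s, e)" by force
    have "s \<le> order e (char_poly A)"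
      using jordan_nf_block_size_order_bound[OF jnf] x xe by auto
    moreover have "s \<noteq> 0" using jnf x xe unfolding jordan_nf_def by force
    ultimately show "fst x = 1" using ord[of e] xe by (auto split: if_splits)
  qed
  assume "e \<in> set as"
  then have "1 = sum_list (map fst (filter (\<lambda>x. snd x = e) n_as))"
    using jordan_nf_order[OF jnf, of e] ord[of e] by simp
  also have "\<dots> = length (filter (\<lambda>x. snd x = e) n_as)"
    using ones by (intro sum_list_map_fst_ones) auto
  finally show "length (filter (\<lambda>x. snd x = e) n_as) = 1" by simp
qed

lemma diagonalize_simple_spectrum:
  fixes A :: "'a::conjugatable_ordered_field mat"
  assumes A: "A \<in> carrier_mat n n" and cp: "char_poly A = (\<Prod>a\<leftarrow>as. [:-a, 1:])"
    and "distinct as"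
  obtains P Q d where "P \<in> carrier_mat n n" "Q \<in> carrier_mat n n" "P * Q = 1\<^sub>m n"
    "Q * A = mat n n (\<lambda>(i, j). if i = j then d i else 0) * Q"
    "\<And>e. e \<in> set as \<Longrightarrow> \<exists>!k. k < n \<and> d k = e"
proof -
  obtain n_as where jnf: "jordan_nf A n_as" using jordan_nf_exists[OF A cp] by blast
  note blocks = jordan_nf_simple_spectrum[OF jnf cp \<open>distinct as\<close>]
  from jnf obtain P Q where "similar_mat_wit A (jordan_matrix n_as) P Q"
    unfolding jordan_nf_def similar_mat_def by blast
  note wit = similar_mat_witD2[OF A this]
  have len: "length n_as = n"
    using wit(5) jordan_matrix_carrier[of n_as] sum_list_map_fst_ones[OF blocks(1)] by auto
  define d where "d j = snd (n_as ! j)" for j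
  have J: "jordan_matrix n_as = mat n n (\<lambda>(i, j). if i = j then d i else 0)"
    using jordan_matrix_size_one_blocks_entry[OF blocks(1)] wit(5) len
    by (intro eq_matI) (auto simp: d_def)
  have "Q * A = Q * (P * (jordan_matrix n_as * Q))"
    using wit by (simp add: assoc_mult_mat[of _ n n _ n _ n])
  also have "\<dots> = (Q * P) * (jordan_matrix n_as * Q)"
    by (rule assoc_mult_mat[symmetric, of _ n n _ n _ n]) (use wit in auto)
  also have "\<dots> = jordan_matrix n_as * Q"
    unfolding wit(2) by (rule left_mult_one_mat[OF mult_carrier_mat[OF wit(5,7)]])
  finally have QA: "Q * A = jordan_matrix n_as * Q" .
  have "\<exists>!k. k < n \<and> d k = e" if "e \<in> set as" for e
  proof -
    have "card {k. k < n \<and> d k = e} = 1"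
      using blocks(2)[OF that] by (simp add: length_filter_conv_card d_def len)
    then obtain k where k: "{j. j < n \<and> d j = e} = {k}" by (rule card_1_singletonE)
    then show ?thesis by (intro ex1I[of _ k]) auto
  qed
  then show thesis by (rule that[OF wit(6,7,1) QA[unfolded J]])
qed

lemma smult_one_mult_vec:
  fixes u :: "'a::comm_ring_1 vec"
  assumes "u \<in> carrier_vec n"
  shows "(e \<cdot>\<^sub>m 1\<^sub>m n) *\<^sub>v u = e \<cdot>\<^sub>v u"
  using assms by (intro eq_vecI) (auto simp: scalar_prod_def if_distrib if_distribR cong: if_cong)

lemma smult_one_minus_mult_vec_eq_0_iff:
  fixes A :: "'a::comm_ring_1 mat"
  assumes "A \<in> carrier_mat n n" and "u \<in> carrier_vec n"
  shows "(e \<cdot>\<^sub>m 1\<^sub>m n - A) *\<^sub>v u = 0\<^sub>v n \<longleftrightarrow> A *\<^sub>v u = e \<cdot>\<^sub>v u"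
proof -
  have "(e \<cdot>\<^sub>m 1\<^sub>m n - A) *\<^sub>v u = e \<cdot>\<^sub>v u - A *\<^sub>v u"
    using minus_mult_distrib_mat_vec[of "e \<cdot>\<^sub>m 1\<^sub>m n" n n A u] smult_one_mult_vec[of u n e] assms
    by simp
  then show ?thesis using assms by (auto simp: vec_eq_iff)
qed

lemma mult_mat_vec_unit_vec:
  fixes A :: "'a::semiring_1 mat"
  assumes "A \<in> carrier_mat m n" and "k < n"
  shows "A *\<^sub>v unit_vec n k = col A k"
  using assms by (intro eq_vecI) (auto simp: scalar_prod_def if_distrib if_distribR cong: if_cong)

lemma diag_mat_mult_vec_nth:
  assumes "z \<in> carrier_vec n" and "j < n"
  shows "(mat n n (\<lambda>(i, j). if i = j then d i else 0) *\<^sub>v z) $ j = d j * z $ j"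
  using assms by (simp add: scalar_prod_def if_distrib if_distribR cong: if_cong)

lemma eigenvector_coordinate_diagonalized:
  fixes A :: "'a::field mat"
  assumes A: "A \<in> carrier_mat n n" and P: "P \<in> carrier_mat n n" and Q: "Q \<in> carrier_mat n n"
    and PQ: "P * Q = 1\<^sub>m n" and QA: "Q * A = mat n n (\<lambda>(i, j). if i = j then d i else 0) * Q"
    and k: "k < n" and simple: "\<forall>j<n. d j = d k \<longrightarrow> j = k"
    and y: "y \<in> carrier_vec n" "A *\<^sub>v y = d k \<cdot>\<^sub>v y"
  shows "y = (Q *\<^sub>v y) $ k \<cdot>\<^sub>v col P k"
proof -
  let ?D = "mat n n (\<lambda>(i, j). if i = j then d i else 0)"
  have Qy_carrier: "Q *\<^sub>v y \<in> carrier_vec n" using Q y(1) by (rule mult_mat_vec_carrier)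
  have "?D *\<^sub>v (Q *\<^sub>v y) = (Q * A) *\<^sub>v y"
    unfolding QA using assoc_mult_mat_vec[of ?D n n Q n y] Q y by simp
  also have "\<dots> = d k \<cdot>\<^sub>v (Q *\<^sub>v y)"
    using A Q y by (simp add: mult_mat_vec)
  finally have DQ: "?D *\<^sub>v (Q *\<^sub>v y) = d k \<cdot>\<^sub>v (Q *\<^sub>v y)" .
  have "d j * (Q *\<^sub>v y) $ j = d k * (Q *\<^sub>v y) $ j" if "j < n" for j
    using arg_cong[OF DQ, of "\<lambda>u. u $ j"] diag_mat_mult_vec_nth[OF Qy_carrier that]
      carrier_vecD[OF Qy_carrier] that
    by simp
  then have Qy: "Q *\<^sub>v y = (Q *\<^sub>v y) $ k \<cdot>\<^sub>v unit_vec n k"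
    using Q k simple by (intro eq_vecI) (auto simp: unit_vec_def)
  have "y = (P * Q) *\<^sub>v y" using PQ y by simp
  also have "\<dots> = P *\<^sub>v (Q *\<^sub>v y)" using P Q y by simp
  also have "\<dots> = P *\<^sub>v ((Q *\<^sub>v y) $ k \<cdot>\<^sub>v unit_vec n k)" by (rule arg_cong[OF Qy])
  also have "\<dots> = (Q *\<^sub>v y) $ k \<cdot>\<^sub>v col P k"
    using P k by (simp add: mult_mat_vec mult_mat_vec_unit_vec)
  finally show ?thesis .
qed

lemma eigenspace_simple_spectrum:
  fixes A :: "'a::conjugatable_ordered_field mat"
  assumes A: "A \<in> carrier_mat n n" and cp: "char_poly A = (\<Prod>a\<leftarrow>as. [:-a, 1:])"
    and "distinct as" and v: "eigenvector A v e"
    and u: "u \<in> carrier_vec n" "A *\<^sub>v u = e \<cdot>\<^sub>v u"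
  shows "\<exists>c. u = c \<cdot>\<^sub>v v"
proof -
  obtain P Q d where PQ: "P \<in> carrier_mat n n" "Q \<in> carrier_mat n n" "P * Q = 1\<^sub>m n"
    "Q * A = mat n n (\<lambda>(i, j). if i = j then d i else 0) * Q"
    and simple: "\<And>e. e \<in> set as \<Longrightarrow> \<exists>!k. k < n \<and> d k = e"
    using diagonalize_simple_spectrum[OF A cp \<open>distinct as\<close>] by blast
  have "poly (char_poly A) e = 0"
    using v eigenvalue_root_char_poly[OF A] unfolding eigenvalue_def by blast
  then have "e \<in> set as" unfolding cp by (auto simp: poly_prod_list_zero_iff)
  then obtain k where k: "k < n" "d k = e" and uniq: "\<forall>j<n. d j = d k \<longrightarrow> j = k"
    using simple by metis
  have v': "v \<in> carrier_vec n" "v \<noteq> 0\<^sub>v n" "A *\<^sub>v v = d k \<cdot>\<^sub>v v"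
    using v A k unfolding eigenvector_def by auto
  note coord = eigenvector_coordinate_diagonalized[OF A PQ k(1) uniq]
  have v_coord: "v = (Q *\<^sub>v v) $ k \<cdot>\<^sub>v col P k" by (rule coord) (use v' in auto)
  with v' have "(Q *\<^sub>v v) $ k \<noteq> 0" by (auto simp: vec_eq_iff)
  moreover have "u = (Q *\<^sub>v u) $ k \<cdot>\<^sub>v col P k" by (rule coord) (use u k in auto)
  ultimately have "u = ((Q *\<^sub>v u) $ k / (Q *\<^sub>v v) $ k) \<cdot>\<^sub>v v"
    using v_coord by (metis smult_smult_assoc nonzero_divide_eq_eq)
  then show ?thesis ..
qed

lemma adj_mat_rank_one:
  fixes M :: "'a::field mat"
  assumes M: "M \<in> carrier_mat n n"
    and v: "v \<in> carrier_vec n" "v \<noteq> 0\<^sub>v n" "M *\<^sub>v v = 0\<^sub>v n"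
    and ker: "\<And>u. u \<in> carrier_vec n \<Longrightarrow> M *\<^sub>v u = 0\<^sub>v n \<Longrightarrow> \<exists>c. u = c \<cdot>\<^sub>v v"
  obtains w where "w \<in> carrier_vec n" "transpose_mat M *\<^sub>v w = 0\<^sub>v n"
    "\<And>z. z \<in> carrier_vec n \<Longrightarrow> adj_mat M *\<^sub>v z = (w \<bullet> z) \<cdot>\<^sub>v v"
    "(\<Sum>j<n. adj_mat M $$ (j, j)) = w \<bullet> v"
proof -
  let ?A = "adj_mat M"
  have A: "?A \<in> carrier_mat n n" using adj_mat(1)[OF M] .
  have "det M = 0" using det_0_iff_vec_prod_zero[OF M] v by auto
  then have MA: "M * ?A = 0\<^sub>m n n" and AM: "?A * M = 0\<^sub>m n n"
    using adj_mat(2,3)[OF M] by (auto intro!: eq_matI)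
  have "\<exists>c. col ?A b = c \<cdot>\<^sub>v v" if "b < n" for b
    using ker[of "col ?A b"] col_mult2[OF M A that] MA A that by simp
  then obtain c where c: "\<And>b. b < n \<Longrightarrow> col ?A b = c b \<cdot>\<^sub>v v" by metis
  define w where "w = vec n c"
  have entry: "?A $$ (a, b) = v $ a * w $ b" if "a < n" "b < n" for a b
    using arg_cong[OF c[OF that(2)], of "\<lambda>u. u $ a"] A v that by (simp add: w_def)
  have w: "w \<in> carrier_vec n" unfolding w_def by simp
  have Az: "?A *\<^sub>v z = (w \<bullet> z) \<cdot>\<^sub>v v" if "z \<in> carrier_vec n" for z
    using A v w that entry
    by (intro eq_vecI) (auto simp: scalar_prod_def sum_distrib_left ac_simps intro!: sum.cong)
  have "(\<Sum>j<n. ?A $$ (j, j)) = w \<bullet> v"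
    using v w entry by (auto simp: scalar_prod_def atLeast0LessThan ac_simps intro!: sum.cong)
  moreover have "transpose_mat M *\<^sub>v w = 0\<^sub>v n"
  proof -
    obtain a where a: "a < n" "v $ a \<noteq> 0" using v by (auto simp: vec_eq_iff)
    have "row ?A a = v $ a \<cdot>\<^sub>v w" using A w a entry by (intro eq_vecI) auto
    then have "v $ a * (transpose_mat M *\<^sub>v w) $ b = (?A * M) $$ (a, b)" if "b < n" for b
      using M A w a that by (simp add: comm_scalar_prod[of _ n])
    then show ?thesis using AM M w a by (intro eq_vecI) auto
  qed
  ultimately show thesis using w Az that by blast
qed

lemma poly_pderiv_char_poly_adj_mat:
  fixes A :: "'a::field mat"
  assumes A: "A \<in> carrier_mat n n"
  shows "poly (pderiv (char_poly A)) e = (\<Sum>j<n. adj_mat (e \<cdot>\<^sub>m 1\<^sub>m n - A) $$ (j, j))"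
proof -
  let ?M = "e \<cdot>\<^sub>m 1\<^sub>m n - A"
  have M: "?M \<in> carrier_mat n n" using A by auto
  have "poly (char_poly (mat_delete A j j)) e = adj_mat ?M $$ (j, j)" if "j < n" for j
  proof -
    have "- char_matrix (mat_delete A j j) e = mat_delete ?M j j"
      using A that by (intro eq_matI) (auto simp: char_matrix_def mat_delete_def)
    then show ?thesis
      using char_poly_matrix[OF mat_delete_carrier[OF A]] A that
      by (simp add: adj_mat_def cofactor_def)
  qed
  then show ?thesis by (simp add: pderiv_char_poly[OF A] poly_sum)
qed

lemma adj_mat_simple_eigenvalue:
  fixes A :: "'a::{conjugatable_ordered_field, field_char_0} mat"
  assumes A: "A \<in> carrier_mat n n" and cp: "char_poly A = (\<Prod>a\<leftarrow>as. [:-a, 1:])"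
    and "distinct as" and v: "eigenvector A v e"
  obtains w where "w \<in> carrier_vec n" "transpose_mat A *\<^sub>v w = e \<cdot>\<^sub>v w" "w \<bullet> v \<noteq> 0"
    "\<And>z. z \<in> carrier_vec n \<Longrightarrow> adj_mat (e \<cdot>\<^sub>m 1\<^sub>m n - A) *\<^sub>v z = (w \<bullet> z) \<cdot>\<^sub>v v"
proof -
  let ?M = "e \<cdot>\<^sub>m 1\<^sub>m n - A"
  have M: "?M \<in> carrier_mat n n" using A by (intro minus_carrier_mat) auto
  have v': "v \<in> carrier_vec n" "v \<noteq> 0\<^sub>v n" "?M *\<^sub>v v = 0\<^sub>v n"
    using v A smult_one_minus_mult_vec_eq_0_iff[OF A] unfolding eigenvector_def by auto
  have "\<exists>c. u = c \<cdot>\<^sub>v v" if "u \<in> carrier_vec n" "?M *\<^sub>v u = 0\<^sub>v n" for u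
    using eigenspace_simple_spectrum[OF A cp \<open>distinct as\<close> v] that
      smult_one_minus_mult_vec_eq_0_iff[OF A]
    by simp
  then obtain w where w: "w \<in> carrier_vec n" "transpose_mat ?M *\<^sub>v w = 0\<^sub>v n"
    and adj: "\<And>z. z \<in> carrier_vec n \<Longrightarrow> adj_mat ?M *\<^sub>v z = (w \<bullet> z) \<cdot>\<^sub>v v"
    and trace: "(\<Sum>j<n. adj_mat ?M $$ (j, j)) = w \<bullet> v"
    using adj_mat_rank_one[OF M v'] by blast
  have "transpose_mat ?M = e \<cdot>\<^sub>m 1\<^sub>m n - transpose_mat A"
    using A by (intro eq_matI) auto
  then have "transpose_mat A *\<^sub>v w = e \<cdot>\<^sub>v w"
    using w smult_one_minus_mult_vec_eq_0_iff[of "transpose_mat A" n w] A by simp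
  moreover have "poly (char_poly A) e = 0"
    using eigenvalue_root_char_poly[OF A] v unfolding eigenvalue_def by blast
  then have "poly (pderiv (char_poly A)) e \<noteq> 0"
    using rsquarefree_linear_factors[OF \<open>distinct as\<close>] unfolding cp rsquarefree_roots by blast
  then have "w \<bullet> v \<noteq> 0"
    using trace poly_pderiv_char_poly_adj_mat[OF A] by simp
  ultimately show thesis using that w(1) adj by blast
qed

lemma CM_Lax_eigenvector_pairing:
  assumes xd: "\<forall>a<n. \<forall>b<n. a \<noteq> b \<longrightarrow> x a \<noteq> x b"
    and v: "v \<in> carrier_vec n" and w: "w \<in> carrier_vec n"
    and Lv: "CM_Lax n x p *\<^sub>v v = \<mu> \<cdot>\<^sub>v v"
    and Lw: "transpose_mat (CM_Lax n x p) *\<^sub>v w = \<mu> \<cdot>\<^sub>v w"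
  shows "(w \<bullet> ones_vec n) * (ones_vec n \<bullet> v) = w \<bullet> v"
proof -
  define L where "L a b = (if a = b then p a else 1 / (x a - x b))" for a b
  have Lv': "(\<Sum>b<n. L a b * v $ b) = \<mu> * v $ a" if "a < n" for a
    using arg_cong[OF Lv, of "\<lambda>u. u $ a"] v that
    by (simp add: CM_Lax_def L_def scalar_prod_def atLeast0LessThan)
  have Lw': "(\<Sum>a<n. L a b * w $ a) = \<mu> * w $ b" if "b < n" for b
    using arg_cong[OF Lw, of "\<lambda>u. u $ b"] w that
    by (simp add: CM_Lax_def L_def scalar_prod_def atLeast0LessThan)
  \<comment> \<open>\<open>S = w\<^sup>T [X, L] v\<close>, evaluated once entrywise and once through the eigenvector equations\<close>
  define S where "S = (\<Sum>a<n. \<Sum>b<n. w $ a * L a b * v $ b * (x a - x b))"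
  have "S = (\<Sum>a<n. \<Sum>b<n. w $ a * v $ b - (if a = b then w $ a * v $ b else 0))"
    unfolding S_def using xd by (intro sum.cong refl) (auto simp: L_def)
  then have S_ones: "S = (\<Sum>a<n. w $ a) * (\<Sum>b<n. v $ b) - (\<Sum>a<n. w $ a * v $ a)"
    by (simp add: sum_subtractf sum_product)
  have swap: "(\<Sum>a<n. \<Sum>b<n. v $ b * x b * (L a b * w $ a))
      = (\<Sum>b<n. v $ b * x b * (\<Sum>a<n. L a b * w $ a))"
    by (subst sum.swap) (simp add: sum_distrib_left)
  have "S = (\<Sum>a<n. \<Sum>b<n. w $ a * x a * (L a b * v $ b))
          - (\<Sum>a<n. \<Sum>b<n. v $ b * x b * (L a b * w $ a))"
    unfolding S_def sum_subtractf[symmetric] by (intro sum.cong refl) (simp add: algebra_simps)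
  also have "\<dots> = (\<Sum>a<n. w $ a * x a * (\<Sum>b<n. L a b * v $ b))
          - (\<Sum>b<n. v $ b * x b * (\<Sum>a<n. L a b * w $ a))"
    unfolding swap by (simp add: sum_distrib_left)
  also have "\<dots> = 0"
    using Lv' Lw' by (simp add: ac_simps)
  finally have "S = 0" .
  with S_ones show ?thesis
    using v w by (simp add: ones_vec_def scalar_prod_def atLeast0LessThan)
qed

theorem mainTheorem10:
  fixes n :: nat and x p lam :: "nat \<Rightarrow> real" and i :: nat and Psi :: "real vec"
  assumes "n \<ge> 1"
    and "\<forall>a<n. \<forall>b<n. a \<noteq> b \<longrightarrow> x a \<noteq> x b"
    and "inj_on lam {..<n}"
    and "\<forall>j<n. eigenvalue (CM_Lax n x p) (lam j)"
    and "i < n"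
    and "eigenvector (CM_Lax n x p) Psi (lam i)"
  shows "ones_vec n \<bullet> Psi \<noteq> 0 \<and>
    (vec n x \<bullet> (adj_mat (lam i \<cdot>\<^sub>m 1\<^sub>m n - CM_Lax n x p) *\<^sub>v ones_vec n))
      / (ones_vec n \<bullet> (adj_mat (lam i \<cdot>\<^sub>m 1\<^sub>m n - CM_Lax n x p) *\<^sub>v ones_vec n))
    = (vec n x \<bullet> Psi) / (ones_vec n \<bullet> Psi)"
proof -
  define L where "L = CM_Lax n x p"
  have L: "L \<in> carrier_mat n n" unfolding L_def CM_Lax_def by simp
  have Psi: "Psi \<in> carrier_vec n" "L *\<^sub>v Psi = lam i \<cdot>\<^sub>v Psi"
    using assms(6) L unfolding eigenvector_def L_def by auto
  have distinct: "distinct (map lam [0..<n])"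
    using assms(3) by (simp add: distinct_map atLeast0LessThan)
  have cp: "char_poly L = (\<Prod>a\<leftarrow>map lam [0..<n]. [:-a, 1:])"
    using assms(4) by (intro char_poly_eq_linear_factors[OF L distinct]) (auto simp: L_def)
  obtain w where w: "w \<in> carrier_vec n" "transpose_mat L *\<^sub>v w = lam i \<cdot>\<^sub>v w" "w \<bullet> Psi \<noteq> 0"
    and adj: "\<And>z. z \<in> carrier_vec n \<Longrightarrow>
      adj_mat (lam i \<cdot>\<^sub>m 1\<^sub>m n - L) *\<^sub>v z = (w \<bullet> z) \<cdot>\<^sub>v Psi"
    using adj_mat_simple_eigenvalue[OF L cp distinct assms(6)[folded L_def]] by blast
  have "(w \<bullet> ones_vec n) * (ones_vec n \<bullet> Psi) = w \<bullet> Psi"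
    using CM_Lax_eigenvector_pairing[OF assms(2) Psi(1) w(1)] Psi(2) w(2) unfolding L_def by blast
  with w(3) have "w \<bullet> ones_vec n \<noteq> 0" "ones_vec n \<bullet> Psi \<noteq> 0" by auto
  moreover have "ones_vec n \<in> carrier_vec n" unfolding ones_vec_def by simp
  ultimately show ?thesis
    using adj[of "ones_vec n"] Psi(1) unfolding L_def by simp
qed

end
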